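(* Let $\beta\in(0,1)$, $z>0$, $c>0$, and let $N$ be a positive integer. Let $F$ be a continuous cumulative distribution function with support $[\underline{w},\overline{w}]$, $\underline{w}<\overline{w}$, and mean $\mu_w$. Assume $\underline{w}<(1-\beta)z+\beta\mu_w$ and $z+c<\overline{w}$. For $x\in[\underline{w},\overline{w}]$ put $$\Upsilon(x)=\int_{\underline{w}}^{x}x\,dF(w)+\int_{x}^{\overline{w}}w\,dF(w).$$ Then the equation $x=z(1-\beta)+\beta\,\Upsilon(x)$ has exactly one solution $x\in[\underline{w},\overline{w}]$; call it $w_R(0)$. Defining recursively $w_R(n)=(z+c)(1-\beta)+\beta\,\Upsilon(w_R(n-1))$ for $n=1,\dots,N$, we have $$\overline{w}>w_R(N)>\cdots>w_R(n+1)>w_R(n)>\cdots>w_R(0)>\underline{w}.$$ Moreover, the same conclusions hold when the support of $F$ is $[\underline{w},\infty)$ (with $F$ continuous with finite mean $\mu_w$, $\underline{w}<(1-\beta)z+\beta\mu_w$, $\Upsilon(x)=\int_{\underline{w}}^{x}x\,dF(w)+\int_x^\infty w\,dF(w)$): the equation $x=z(1-\beta)+\beta\Upsilon(x)$ has a unique solution $w_R(0)\in[\underline{w},\infty)$ and $\underline{w}<w_R(0)<w_R(1)<\cdots<w_R(N)<\infty$.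
   Context: Interpretation (the paper's model): a risk-neutral, infinitely lived worker maximizes $\mathrm{E}_0\sum_{t\ge0}\beta^t x_t$, where $x_t$ is income. While unemployed, the worker draws one i.i.d. wage offer per period from $F$; an accepted job paying $w$ is kept forever (value $W(w)=w/(1-\beta)$). While unemployed with $n\ge1$ remaining periods of unemployment-insurance benefits, flow income is $z+c$ ($z$ = value of nonwork, $c$ = benefit) and the state moves to $n-1$ after a rejection; with $n=0$ remaining periods flow income is $z$ and the state stays at $0$. The value of unemployment satisfies $U(n)=z+c+\beta\mathrm{E}[\max\{U(n-1),W(w)\}]$ for $n\ge1$ and $U(0)=z+\beta\mathrm{E}[\max\{U(0),W(w)\}]$. The reservation wage $w_R(n)$ is defined by $W(w_R(n))=U(n)$, and it satisfies exactly the equations given in the claim; the optimal policy in state $n$ is to accept any offer $w\ge w_R(n)$. No possibility of extension of benefits is considered here. *)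

theory Defs
  imports "HOL-Probability.Probability"
begin

definition dist_support :: "real measure \<Rightarrow> real set" where
  "dist_support M = {x. \<forall>e>0. 0 < measure M (ball x e)}"

definition Upsilon :: "real measure \<Rightarrow> real \<Rightarrow> real \<Rightarrow> real \<Rightarrow> real" where
  "Upsilon M lo hi x = (LINT w:{lo..x}|M. x) + (LINT w:{x..hi}|M. w)"

definition Upsilon_inf :: "real measure \<Rightarrow> real \<Rightarrow> real \<Rightarrow> real" where
  "Upsilon_inf M lo x = (LINT w:{lo..x}|M. x) + (LINT w:{x..}|M. w)"

end

theory Submission
  imports Defs
begin

text \<open>For an atomless wage distribution, Upsilon x is the expectation U x of max x w. This
  function is nondecreasing and 1-Lipschitz, and strictly increasing from the bottom of the
  support on. Hence x - \<beta> U x is a continuous strictly increasing function, and a reservation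
  wage solves x - \<beta> U x = const: one solution exists by the intermediate value theorem, and
  it is unique. Starting from w_R(0), the first step adds exactly c (1 - \<beta>), and strict
  monotonicity of U passes the increase on to every later step. In the bounded case
  U hi = hi, so hi is an upper barrier for the iteration.\<close>

lemma AE_in_dist_support:
  assumes "real_distribution M"
  shows "AE x in M. x \<in> dist_support M"
proof -
  interpret real_distribution M by fact
  define F where "F = {ball x e | x e. e > 0 \<and> measure M (ball x e) = 0}"
  obtain F' where F': "F' \<subseteq> F" "countable F'" "\<Union>F' = \<Union>F"
    using Lindelof[of F] unfolding F_def by blast
  have "(\<Union>S\<in>F'. S) \<in> null_sets M"
  proof (rule null_sets_UN'[OF F'(2)])
    fix S assume "S \<in> F'"
    then obtain x e where "S = ball x e" "measure M (ball x e) = 0"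
      using F'(1) unfolding F_def by blast
    then show "S \<in> null_sets M" by (simp add: emeasure_eq_measure null_sets_def)
  qed
  moreover have "{x \<in> space M. x \<notin> dist_support M} \<subseteq> \<Union>F'"
  proof
    fix x assume "x \<in> {x \<in> space M. x \<notin> dist_support M}"
    then obtain e where "e > 0" "\<not> 0 < measure M (ball x e)"
      unfolding dist_support_def by auto
    then have "ball x e \<in> F"
      unfolding F_def using measure_nonneg[of M "ball x e"] by force
    then show "x \<in> \<Union>F'" using \<open>e > 0\<close> F'(3) by (metis UnionI centre_in_ball)
  qed
  ultimately show ?thesis by (intro AE_I') auto
qed

definition expected_max :: "real measure \<Rightarrow> real \<Rightarrow> real" where
  "expected_max M x = (\<integral>w. max x w \<partial>M)"

lemma set_integrals_eq_expected_max:
  assumes "real_distribution M" "integrable M (\<lambda>w. w)" "isCont (cdf M) x"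
    and "S \<subseteq> {x..}" "S \<in> sets borel" "AE w in M. lo \<le> w \<and> (x < w \<longrightarrow> w \<in> S)"
  shows "(LINT w:{lo..x}|M. x) + (LINT w:S|M. w) = expected_max M x"
proof -
  interpret real_distribution M by fact
  have "{x} \<in> null_sets M"
    using assms(3) isCont_cdf by (simp add: emeasure_eq_measure null_sets_def)
  then have "AE w in M. w \<noteq> x"
    by (rule AE_I') auto
  then have "AE w in M. indicator {lo..x} w *\<^sub>R x + indicator S w *\<^sub>R w = max x w"
    using assms(6) by eventually_elim (use assms(4) in \<open>auto simp: indicator_def\<close>)
  then have "expected_max M x = (\<integral>w. indicator {lo..x} w *\<^sub>R x + indicator S w *\<^sub>R w \<partial>M)"
    unfolding expected_max_def using assms(5) by (intro integral_cong_AE) auto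
  also have "\<dots> = (LINT w:{lo..x}|M. x) + (LINT w:S|M. w)"
  proof -
    have "integrable M (\<lambda>w. indicator {lo..x} w *\<^sub>R x)"
      using integrable_real_mult_indicator[of "{lo..x}" M "\<lambda>_. x"] by simp
    moreover have "integrable M (\<lambda>w. indicator S w *\<^sub>R w)"
      using integrable_real_mult_indicator[of S M "\<lambda>w. w"] assms(2,5) by (simp add: mult.commute)
    ultimately show ?thesis unfolding set_lebesgue_integral_def by simp
  qed
  finally show ?thesis by simp
qed

lemma Upsilon_eq_expected_max:
  assumes "real_distribution M" "integrable M (\<lambda>w. w)" "isCont (cdf M) x"
    and "AE w in M. lo \<le> w \<and> w \<le> hi"
  shows "Upsilon M lo hi x = expected_max M x"
  unfolding Upsilon_def using assms(4)
  by (intro set_integrals_eq_expected_max[OF assms(1-3)]) (auto elim: eventually_mono)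

lemma Upsilon_inf_eq_expected_max:
  assumes "real_distribution M" "integrable M (\<lambda>w. w)" "isCont (cdf M) x"
    and "AE w in M. lo \<le> w"
  shows "Upsilon_inf M lo x = expected_max M x"
  unfolding Upsilon_inf_def using assms(4)
  by (intro set_integrals_eq_expected_max[OF assms(1-3)]) (auto elim: eventually_mono)

lemma integrable_max_const:
  fixes M :: "real measure" and x :: real
  assumes "prob_space M" "integrable M (\<lambda>w. w)"
  shows "integrable M (\<lambda>w. max x w)"
proof -
  interpret prob_space M by fact
  show ?thesis using integrable_max[of M "\<lambda>_. x" "\<lambda>w. w"] assms(2) by simp
qed

lemma expected_max_mono:
  assumes "prob_space M" "integrable M (\<lambda>w. w)" "x \<le> y"
  shows "expected_max M x \<le> expected_max M y"
  unfolding expected_max_def using assms integrable_max_const by (intro integral_mono) auto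

lemma expected_max_lipschitz:
  assumes "prob_space M" "integrable M (\<lambda>w. w)"
  shows "1-lipschitz_on UNIV (expected_max M)"
proof (rule lipschitz_onI)
  fix x y :: real
  interpret prob_space M by fact
  have "dist (expected_max M x) (expected_max M y) = \<bar>\<integral>w. max x w - max y w \<partial>M\<bar>"
    unfolding expected_max_def dist_real_def
    using Bochner_Integration.integral_diff[OF integrable_max_const integrable_max_const, OF assms assms]
    by simp
  also have "\<dots> \<le> (\<integral>w. \<bar>x - y\<bar> \<partial>M)"
    using assms integrable_max_const by (intro integral_abs_bound_integral) auto
  also have "\<dots> = 1 * dist x y"
    by (simp add: prob_space dist_real_def)
  finally show "dist (expected_max M x) (expected_max M y) \<le> 1 * dist x y" .
qed simp

lemma expected_max_strict_mono:
  assumes "real_distribution M" "integrable M (\<lambda>w. w)" "lo \<in> dist_support M" "lo \<le> x" "x < y"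
  shows "expected_max M x < expected_max M y"
proof -
  interpret real_distribution M by fact
  \<comment> \<open>max y w - max x w \<ge> (y - x) / 2 below m, a set of positive mass as lo \<in> support\<close>
  define m where "m = (x + y) / 2"
  have "0 < measure M (ball lo (m - lo))"
    using assms(3-5) unfolding dist_support_def m_def by auto
  also have "\<dots> \<le> measure M {..<m}"
    by (intro finite_measure_mono) (auto simp: dist_real_def)
  finally have "0 < measure M {..<m} * ((y - x) / 2)"
    using assms(5) by simp
  also have "\<dots> = (\<integral>w. indicator {..<m} w * ((y - x) / 2) \<partial>M)"
    by simp
  also have "\<dots> \<le> (\<integral>w. max y w - max x w \<partial>M)"
  proof -
    have "integrable M (\<lambda>w. indicator {..<m} w * ((y - x) / 2))"
      using integrable_real_mult_indicator[of "{..<m}" M "\<lambda>_. (y - x) / 2"]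
      by (simp add: mult.commute)
    then show ?thesis
      using integrable_max_const[OF prob_space_axioms assms(2)] assms(5)
      by (intro integral_mono) (auto simp: indicator_def m_def)
  qed
  also have "\<dots> = expected_max M y - expected_max M x"
    unfolding expected_max_def
    using integrable_max_const[OF prob_space_axioms assms(2)] by simp
  finally show ?thesis by simp
qed

lemma expected_max_eq_expectation:
  assumes "integrable M (\<lambda>w. w)" "AE w in M. lo \<le> w"
  shows "expected_max M lo = (\<integral>w. w \<partial>M)"
  unfolding expected_max_def
proof (rule integral_cong_AE)
  show "AE w in M. max lo w = w"
    using assms(2) by (rule eventually_mono) simp
qed (use borel_measurable_integrable[OF assms(1)] in simp_all)

lemma expected_max_eq_self:
  assumes "prob_space M" "integrable M (\<lambda>w. w)" "AE w in M. w \<le> x"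
  shows "expected_max M x = x"
proof -
  interpret prob_space M by fact
  have "expected_max M x = (\<integral>w. x \<partial>M)"
    unfolding expected_max_def
  proof (rule integral_cong_AE)
    show "AE w in M. max x w = x"
      using assms(3) by (rule eventually_mono) simp
  qed (use borel_measurable_integrable[OF assms(2)] in simp_all)
  then show ?thesis by (simp add: prob_space)
qed

lemma expected_max_le:
  assumes "prob_space M" "integrable M (\<lambda>w. w)"
  shows "expected_max M x \<le> \<bar>x\<bar> + (\<integral>w. \<bar>w\<bar> \<partial>M)"
proof -
  interpret prob_space M by fact
  have "expected_max M x \<le> (\<integral>w. \<bar>x\<bar> + \<bar>w\<bar> \<partial>M)"
    unfolding expected_max_def using assms integrable_max_const by (intro integral_mono) auto
  also have "\<dots> = \<bar>x\<bar> + (\<integral>w. \<bar>w\<bar> \<partial>M)"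
    using assms(2) by (simp add: prob_space)
  finally show ?thesis .
qed

lemma discounted_expected_max_eventually_below:
  assumes "prob_space M" "integrable M (\<lambda>w. w)" "0 \<le> \<beta>" "\<beta> < 1"
  shows "\<exists>X\<ge>lo. a + \<beta> * expected_max M X \<le> X"
proof -
  define K where "K = (\<integral>w. \<bar>w\<bar> \<partial>M)"
  define X where "X = max lo ((\<bar>a\<bar> + \<beta> * K) / (1 - \<beta>))"
  have "0 \<le> K"
    unfolding K_def by simp
  then have "0 \<le> (\<bar>a\<bar> + \<beta> * K) / (1 - \<beta>)"
    using assms(3,4) by simp
  then have "0 \<le> X" "(\<bar>a\<bar> + \<beta> * K) / (1 - \<beta>) \<le> X"
    unfolding X_def by linarith+
  then have "\<bar>a\<bar> + \<beta> * K \<le> X - \<beta> * X"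
    using assms(4) by (simp add: pos_divide_le_eq algebra_simps)
  moreover have "\<beta> * expected_max M X \<le> \<beta> * X + \<beta> * K"
    using mult_left_mono[OF expected_max_le[OF assms(1,2), of X] assms(3)] \<open>0 \<le> X\<close>
    unfolding K_def by (simp add: algebra_simps)
  ultimately have "a + \<beta> * expected_max M X \<le> X"
    using abs_ge_self[of a] by linarith
  moreover have "lo \<le> X"
    unfolding X_def by simp
  ultimately show ?thesis by blast
qed

lemma strict_mono_minus_contraction:
  fixes U :: "real \<Rightarrow> real"
  assumes "1-lipschitz_on UNIV U" "0 \<le> \<beta>" "\<beta> < 1"
  shows "strict_mono (\<lambda>x. x - \<beta> * U x)"
proof (rule strict_monoI)
  fix x y :: real
  assume "x < y"
  have "\<beta> * (U y - U x) \<le> \<beta> * (y - x)"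
    using lipschitz_onD[OF assms(1), of y x] \<open>x < y\<close> assms(2)
    by (intro mult_left_mono) (auto simp: dist_real_def)
  also have "\<dots> < 1 * (y - x)"
    using \<open>x < y\<close> assms(3) by (intro mult_strict_right_mono) auto
  finally show "x - \<beta> * U x < y - \<beta> * U y"
    by (simp add: algebra_simps)
qed

lemma discounted_equation_unique_solution:
  fixes U :: "real \<Rightarrow> real"
  assumes "1-lipschitz_on UNIV U" "0 \<le> \<beta>" "\<beta> < 1"
    and "lo \<le> X" "lo < a + \<beta> * U lo" "a + \<beta> * U X \<le> X" "{lo..X} \<subseteq> S"
  shows "\<exists>!x. x \<in> S \<and> x = a + \<beta> * U x"
proof -
  have "continuous_on UNIV U"
    using assms(1) by (rule lipschitz_on_continuous_on)
  then have "\<exists>x\<ge>lo. x \<le> X \<and> x - \<beta> * U x = a"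
    using assms(4-6)
    by (intro IVT) (auto intro!: continuous_intros simp: continuous_on_eq_continuous_at algebra_simps)
  then obtain x where "x \<in> S" "x = a + \<beta> * U x"
    using assms(7) by (auto simp: algebra_simps)
  moreover have "y = x" if "y = a + \<beta> * U y" for y
    using strict_mono_eq[OF strict_mono_minus_contraction[OF assms(1-3)], of y x]
      that \<open>x = a + \<beta> * U x\<close> by (simp add: algebra_simps)
  ultimately show ?thesis by blast
qed

lemma discounted_iterates_strict_mono:
  fixes U :: "real \<Rightarrow> real" and w :: "nat \<Rightarrow> real"
  assumes "1-lipschitz_on UNIV U" "0 < \<beta>" "\<beta> < 1"
    and strict: "\<And>x y. lo \<le> x \<Longrightarrow> x < y \<Longrightarrow> U x < U y"
    and "lo < a + \<beta> * U lo" "a < b"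
    and start: "w 0 = a + \<beta> * U (w 0)"
    and step: "\<And>n. n < N \<Longrightarrow> w (Suc n) = b + \<beta> * U (w n)"
  shows "lo < w 0" and "n < N \<Longrightarrow> w n < w (Suc n)"
proof -
  show "lo < w 0"
    using strict_mono_less[OF strict_mono_minus_contraction[OF assms(1) less_imp_le assms(3)],
        of lo "w 0"] assms(2,5) start by linarith
  have "lo \<le> w n \<and> w n < w (Suc n)" if "n < N" for n
    using that
  proof (induction n)
    case 0
    show ?case
      using \<open>lo < w 0\<close> step[OF 0] start \<open>a < b\<close> by simp
  next
    case (Suc n)
    then have "lo \<le> w n" "w n < w (Suc n)" by simp_all
    then have "U (w n) < U (w (Suc n))" by (rule strict)
    then show ?case
      using \<open>lo \<le> w n\<close> \<open>w n < w (Suc n)\<close> step[of n] step[of "Suc n"] Suc.prems \<open>0 < \<beta>\<close>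
      by simp
  qed
  then show "n < N \<Longrightarrow> w n < w (Suc n)" by blast
qed

lemma discounted_iterates_less:
  fixes U :: "real \<Rightarrow> real" and w :: "nat \<Rightarrow> real"
  assumes "1-lipschitz_on UNIV U" "mono U" "0 \<le> \<beta>" "\<beta> < 1"
    and "U X = X" "a + \<beta> * X < X" "b + \<beta> * X < X"
    and start: "w 0 = a + \<beta> * U (w 0)"
    and step: "\<And>n. n < N \<Longrightarrow> w (Suc n) = b + \<beta> * U (w n)"
  shows "n \<le> N \<Longrightarrow> w n < X"
proof (induction n)
  case 0
  show ?case
    using strict_mono_less[OF strict_mono_minus_contraction[OF assms(1,3,4)], of "w 0" X]
      start assms(6) unfolding assms(5) by linarith
next
  case (Suc n)
  then have "U (w n) \<le> U X"
    using \<open>mono U\<close> by (simp add: monoD)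
  then have "\<beta> * U (w n) \<le> \<beta> * X"
    using assms(3,5) by (simp add: mult_left_mono)
  then show ?case
    using step[of n] Suc.prems assms(7) by simp
qed

lemma reservation_wages_bounded_support:
  fixes M :: "real measure"
  assumes \<beta>: "0 < \<beta>" "\<beta> < 1" and "0 < c"
    and M: "real_distribution M" "\<forall>x. isCont (cdf M) x" "dist_support M = {lo..hi}" "lo < hi"
    and low: "lo < (1 - \<beta>) * z + \<beta> * (\<integral>w. w \<partial>M)" and high: "z + c < hi"
  shows "(\<exists>!x. x \<in> {lo..hi} \<and> x = z * (1 - \<beta>) + \<beta> * Upsilon M lo hi x) \<and>
    (\<forall>wR :: nat \<Rightarrow> real.
      wR 0 \<in> {lo..hi} \<and> wR 0 = z * (1 - \<beta>) + \<beta> * Upsilon M lo hi (wR 0) \<and>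
      (\<forall>n\<in>{1..N}. wR n = (z + c) * (1 - \<beta>) + \<beta> * Upsilon M lo hi (wR (n - 1)))
      \<longrightarrow> hi > wR N \<and> (\<forall>n<N. wR n < wR (Suc n)) \<and> wR 0 > lo)"
    (is "?unique \<and> ?iterates")
proof
  interpret real_distribution M by fact
  have support: "AE w in M. lo \<le> w \<and> w \<le> hi"
    using AE_in_dist_support[OF M(1)] unfolding M(3) by simp
  have int: "integrable M (\<lambda>w. w)"
  proof (rule integrable_const_bound)
    show "AE w in M. norm w \<le> max \<bar>lo\<bar> \<bar>hi\<bar>"
      using support by (rule eventually_mono) auto
  qed simp
  define U where "U = expected_max M"
  have Upsilon_U: "Upsilon M lo hi x = U x" for x
    unfolding U_def using Upsilon_eq_expected_max[OF M(1) int M(2)[rule_format] support] .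
  have lip: "1-lipschitz_on UNIV U"
    unfolding U_def using expected_max_lipschitz[OF prob_space_axioms int] .
  have "mono U"
    unfolding U_def using expected_max_mono[OF prob_space_axioms int] by (rule monoI)
  have strict: "U x < U y" if "lo \<le> x" "x < y" for x y
    unfolding U_def using expected_max_strict_mono[OF M(1) int _ that] M(3,4) by simp
  have "U lo = (\<integral>w. w \<partial>M)"
    unfolding U_def using support
    by (intro expected_max_eq_expectation[OF int]) (auto elim: eventually_mono)
  then have U_lo: "lo < z * (1 - \<beta>) + \<beta> * U lo"
    using low by (simp add: mult.commute)
  have U_hi: "U hi = hi"
    unfolding U_def using support
    by (intro expected_max_eq_self[OF prob_space_axioms int]) (auto elim: eventually_mono)
  have benefit_flow: "z * (1 - \<beta>) < (z + c) * (1 - \<beta>)"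
    using \<open>0 < c\<close> \<beta> by (simp add: algebra_simps)
  have below_hi: "z * (1 - \<beta>) + \<beta> * hi < hi" "(z + c) * (1 - \<beta>) + \<beta> * hi < hi"
    using mult_strict_right_mono[OF high, of "1 - \<beta>"] benefit_flow \<beta> by (auto simp: algebra_simps)
  show ?unique
    unfolding Upsilon_U using lip \<beta> M(4) U_lo U_hi below_hi(1)
    by (intro discounted_equation_unique_solution[where X=hi]) auto
  show ?iterates
  proof (intro allI impI, elim conjE)
    fix wR :: "nat \<Rightarrow> real"
    assume start: "wR 0 = z * (1 - \<beta>) + \<beta> * Upsilon M lo hi (wR 0)"
      and iter: "\<forall>n\<in>{1..N}. wR n = (z + c) * (1 - \<beta>) + \<beta> * Upsilon M lo hi (wR (n - 1))"
    have step: "wR (Suc n) = (z + c) * (1 - \<beta>) + \<beta> * U (wR n)" if "n < N" for n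
      using iter that unfolding Upsilon_U by auto
    note start_U = start[unfolded Upsilon_U]
    have "wR N < hi"
      using discounted_iterates_less[OF lip \<open>mono U\<close> less_imp_le[OF \<beta>(1)] \<beta>(2)
          U_hi below_hi start_U step] by simp
    then show "hi > wR N \<and> (\<forall>n<N. wR n < wR (Suc n)) \<and> wR 0 > lo"
      using discounted_iterates_strict_mono[OF lip \<beta> strict U_lo benefit_flow start_U step]
      by blast
  qed
qed

lemma reservation_wages_unbounded_support:
  fixes M :: "real measure"
  assumes \<beta>: "0 < \<beta>" "\<beta> < 1" and "0 < c"
    and M: "real_distribution M" "\<forall>x. isCont (cdf M) x" "dist_support M = {lo..}"
    and int: "integrable M (\<lambda>w. w)"
    and low: "lo < (1 - \<beta>) * z + \<beta> * (\<integral>w. w \<partial>M)"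
  shows "(\<exists>!x. x \<in> {lo..} \<and> x = z * (1 - \<beta>) + \<beta> * Upsilon_inf M lo x) \<and>
    (\<forall>wR :: nat \<Rightarrow> real.
      wR 0 \<in> {lo..} \<and> wR 0 = z * (1 - \<beta>) + \<beta> * Upsilon_inf M lo (wR 0) \<and>
      (\<forall>n\<in>{1..N}. wR n = (z + c) * (1 - \<beta>) + \<beta> * Upsilon_inf M lo (wR (n - 1)))
      \<longrightarrow> lo < wR 0 \<and> (\<forall>n<N. wR n < wR (Suc n)))"
    (is "?unique \<and> ?iterates")
proof
  interpret real_distribution M by fact
  have support: "AE w in M. lo \<le> w"
    using AE_in_dist_support[OF M(1)] unfolding M(3) by simp
  define U where "U = expected_max M"
  have Upsilon_U: "Upsilon_inf M lo x = U x" for x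
    unfolding U_def using Upsilon_inf_eq_expected_max[OF M(1) int M(2)[rule_format] support] .
  have lip: "1-lipschitz_on UNIV U"
    unfolding U_def using expected_max_lipschitz[OF prob_space_axioms int] .
  have strict: "U x < U y" if "lo \<le> x" "x < y" for x y
    unfolding U_def using expected_max_strict_mono[OF M(1) int _ that] M(3) by simp
  have "U lo = (\<integral>w. w \<partial>M)"
    unfolding U_def using expected_max_eq_expectation[OF int support] .
  then have U_lo: "lo < z * (1 - \<beta>) + \<beta> * U lo"
    using low by (simp add: mult.commute)
  obtain X where "lo \<le> X" "z * (1 - \<beta>) + \<beta> * U X \<le> X"
    using discounted_expected_max_eventually_below[OF prob_space_axioms int, of \<beta> lo] \<beta>
    unfolding U_def by auto
  show ?unique
    unfolding Upsilon_U using lip \<beta> U_lo \<open>lo \<le> X\<close> \<open>z * (1 - \<beta>) + \<beta> * U X \<le> X\<close>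
    by (intro discounted_equation_unique_solution[where X=X]) auto
  show ?iterates
  proof (intro allI impI, elim conjE)
    fix wR :: "nat \<Rightarrow> real"
    assume start: "wR 0 = z * (1 - \<beta>) + \<beta> * Upsilon_inf M lo (wR 0)"
      and iter: "\<forall>n\<in>{1..N}. wR n = (z + c) * (1 - \<beta>) + \<beta> * Upsilon_inf M lo (wR (n - 1))"
    have step: "wR (Suc n) = (z + c) * (1 - \<beta>) + \<beta> * U (wR n)" if "n < N" for n
      using iter that unfolding Upsilon_U by auto
    have benefit_flow: "z * (1 - \<beta>) < (z + c) * (1 - \<beta>)"
      using \<open>0 < c\<close> \<beta> by (simp add: algebra_simps)
    show "lo < wR 0 \<and> (\<forall>n<N. wR n < wR (Suc n))"
      using discounted_iterates_strict_mono[OF lip \<beta> strict U_lo benefit_flow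
          start[unfolded Upsilon_U] step]
      by blast
  qed
qed

theorem proposition1:
  fixes \<beta> z c :: real and N :: nat
  assumes "0 < \<beta>" "\<beta> < 1" "0 < z" "0 < c" "0 < N"
  shows
   "(\<forall>(M :: real measure) (lo :: real) (hi :: real).
       real_distribution M \<and> (\<forall>x. isCont (cdf M) x) \<and>
       dist_support M = {lo..hi} \<and> lo < hi \<and>
       lo < (1 - \<beta>) * z + \<beta> * (integral\<^sup>L M (\<lambda>w. w)) \<and> z + c < hi
     \<longrightarrow>
       (\<exists>!x. x \<in> {lo..hi} \<and> x = z * (1 - \<beta>) + \<beta> * Upsilon M lo hi x) \<and>
       (\<forall>wR :: nat \<Rightarrow> real.
          wR 0 \<in> {lo..hi} \<and> wR 0 = z * (1 - \<beta>) + \<beta> * Upsilon M lo hi (wR 0) \<and>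
          (\<forall>n\<in>{1..N}. wR n = (z + c) * (1 - \<beta>) + \<beta> * Upsilon M lo hi (wR (n - 1)))
        \<longrightarrow> hi > wR N \<and> (\<forall>n<N. wR n < wR (Suc n)) \<and> wR 0 > lo))
  \<and>
   (\<forall>(M :: real measure) (lo :: real).
       real_distribution M \<and> (\<forall>x. isCont (cdf M) x) \<and>
       dist_support M = {lo..} \<and> integrable M (\<lambda>w. w) \<and>
       lo < (1 - \<beta>) * z + \<beta> * (integral\<^sup>L M (\<lambda>w. w))
     \<longrightarrow>
       (\<exists>!x. x \<in> {lo..} \<and> x = z * (1 - \<beta>) + \<beta> * Upsilon_inf M lo x) \<and>
       (\<forall>wR :: nat \<Rightarrow> real.
          wR 0 \<in> {lo..} \<and> wR 0 = z * (1 - \<beta>) + \<beta> * Upsilon_inf M lo (wR 0) \<and>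
          (\<forall>n\<in>{1..N}. wR n = (z + c) * (1 - \<beta>) + \<beta> * Upsilon_inf M lo (wR (n - 1)))
        \<longrightarrow> lo < wR 0 \<and> (\<forall>n<N. wR n < wR (Suc n))))"
  by (rule conjI; intro allI impI; elim conjE)
    (rule reservation_wages_bounded_support[OF assms(1,2,4)]
      reservation_wages_unbounded_support[OF assms(1,2,4)]; assumption)+

end
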